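(* Let $(X,d,\mu)$ be as in the context (no doubling assumed) and $x\in X$. Then $\underline{Q}_0(x)\subset\underline{S}_0(x)$ and $\overline{Q}_0(x)\subset\overline{S}_0(x)$. Moreover, $\underline{S}_0(x)\cap\overline{S}_0(x)$ contains at most one point, and when it is nonempty, $\underline{Q}_0(x)=\underline{S}_0(x)$ and $\overline{Q}_0(x)=\overline{S}_0(x)$.
   Context: $(X,d,\mu)$ is a metric space with a positive complete Borel measure $\mu$ such that $0<\mu(B)<\infty$ for every ball $B$; $B_r=B(x,r)$. $\underline{Q}_0(x)=\{q>0:\exists C_q,\ \mu(B_r)/\mu(B_R)\le C_q(r/R)^q\text{ for }0<r<R\le1\}$; $\underline{S}_0(x)=\{q>0:\exists C_q,\ \mu(B_r)\le C_qr^q\text{ for }0<r\le1\}$; $\overline{S}_0(x)=\{q>0:\exists C_q,\ \mu(B_r)\ge C_qr^q\text{ for }0<r\le1\}$; $\overline{Q}_0(x)=\{q>0:\exists C_q,\ \mu(B_r)/\mu(B_R)\ge C_q(r/R)^q\text{ for }0<r<R\le1\}$. *)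

theory Defs
  imports "HOL-Analysis.Analysis"
begin

text \<open>X is the (metric space) type 'a, mu is a measure M on it. B(x,r) is the open ball.
  Ball measures are used as reals (they are finite by hypothesis).\<close>

definition lowerQ0 :: "'a::metric_space measure \<Rightarrow> 'a \<Rightarrow> real set" where
  "lowerQ0 M x = {q. q > 0 \<and> (\<exists>C>0. \<forall>r R. 0 < r \<and> r < R \<and> R \<le> 1 \<longrightarrow>
      measure M (ball x r) / measure M (ball x R) \<le> C * (r / R) powr q)}"

definition lowerS0 :: "'a::metric_space measure \<Rightarrow> 'a \<Rightarrow> real set" where
  "lowerS0 M x = {q. q > 0 \<and> (\<exists>C>0. \<forall>r. 0 < r \<and> r \<le> 1 \<longrightarrow>
      measure M (ball x r) \<le> C * r powr q)}"

definition upperS0 :: "'a::metric_space measure \<Rightarrow> 'a \<Rightarrow> real set" where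
  "upperS0 M x = {q. q > 0 \<and> (\<exists>C>0. \<forall>r. 0 < r \<and> r \<le> 1 \<longrightarrow>
      measure M (ball x r) \<ge> C * r powr q)}"

definition upperQ0 :: "'a::metric_space measure \<Rightarrow> 'a \<Rightarrow> real set" where
  "upperQ0 M x = {q. q > 0 \<and> (\<exists>C>0. \<forall>r R. 0 < r \<and> r < R \<and> R \<le> 1 \<longrightarrow>
      measure M (ball x r) / measure M (ball x R) \<ge> C * (r / R) powr q)}"

end

theory Submission
  imports Defs
begin

text \<open>Comparing a lower bound \<open>C\<^sub>2 r\<^sup>b\<close> with an upper bound \<open>C\<^sub>1 r\<^sup>a\<close> as \<open>r \<rightarrow> 0\<close> shows
  that every exponent in \<open>lowerS0\<close> is at most every exponent in \<open>upperS0\<close>; in particular the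
  two sets meet in at most one point \<open>s\<close>. Comparing \<open>\<mu>(B\<^sub>r)\<close> with \<open>\<mu>(B\<^sub>1)\<close> gives \<open>Q \<subseteq> S\<close>.
  Conversely, two-sided bounds \<open>\<mu>(B\<^sub>r) \<asymp> r\<^sup>s\<close> give \<open>\<mu>(B\<^sub>r)/\<mu>(B\<^sub>R) \<asymp> (r/R)\<^sup>s\<close>, so \<open>s\<close> lies in
  both \<open>Q\<close>-sets; as these are monotone in the exponent while \<open>lowerS0 \<subseteq> (0, s]\<close> and
  \<open>upperS0 \<subseteq> [s, \<infinity>)\<close>, the \<open>Q\<close>-sets and \<open>S\<close>-sets coincide.\<close>

lemma exists_small_powr_less:
  fixes a D :: real
  assumes "0 < a" "0 < D"
  shows "\<exists>r. 0 < r \<and> r \<le> 1 \<and> r powr a < D"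
proof -
  define r where "r = min 1 ((D/2) powr (1/a))"
  have r0: "0 < r" using assms by (simp add: r_def)
  have "r powr a \<le> ((D/2) powr (1/a)) powr a"
    using assms r0 by (intro powr_mono2) (auto simp: r_def)
  also have "\<dots> = D/2" using assms by (simp add: powr_powr)
  finally show ?thesis using r0 assms by (intro exI[of _ r]) (auto simp: r_def)
qed

lemma ratio_bounds_of_powr_bounds:
  fixes f :: "real \<Rightarrow> real"
  assumes "0 < C\<^sub>2" "0 < r" "0 < R"
    and lower: "\<And>t. t \<in> {r, R} \<Longrightarrow> C\<^sub>2 * t powr s \<le> f t"
    and upper: "\<And>t. t \<in> {r, R} \<Longrightarrow> f t \<le> C\<^sub>1 * t powr s"
  shows "f r / f R \<le> (C\<^sub>1 / C\<^sub>2) * (r / R) powr s"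
    and "(C\<^sub>2 / C\<^sub>1) * (r / R) powr s \<le> f r / f R"
proof -
  have pos: "0 < r powr s" "0 < R powr s" "0 < C\<^sub>2 * R powr s" "0 < C\<^sub>2 * r powr s"
    using assms(1-3) by auto
  have quot: "(r / R) powr s = r powr s / R powr s"
    using assms(2,3) by (simp add: powr_divide)
  have "0 \<le> f r" "0 < f R"
    using lower[of r] lower[of R] pos by auto
  then have "f r / f R \<le> C\<^sub>1 * r powr s / (C\<^sub>2 * R powr s)"
    using lower[of R] upper[of r] pos by (intro frac_le) auto
  then show "f r / f R \<le> (C\<^sub>1 / C\<^sub>2) * (r / R) powr s"
    by (simp add: quot)
  have "C\<^sub>2 * r powr s / (C\<^sub>1 * R powr s) \<le> f r / f R"
    using lower[of r] upper[of R] pos \<open>0 < f R\<close> by (intro frac_le) auto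
  then show "(C\<^sub>2 / C\<^sub>1) * (r / R) powr s \<le> f r / f R"
    by (simp add: quot)
qed

context
  fixes M :: "'a::metric_space measure" and x :: 'a
begin

lemma lowerS0_le_upperS0:
  assumes "a \<in> lowerS0 M x" "b \<in> upperS0 M x"
  shows "a \<le> b"
proof (rule ccontr)
  assume "\<not> a \<le> b"
  obtain C\<^sub>1 where "0 < C\<^sub>1" and C\<^sub>1: "\<And>r. 0 < r \<Longrightarrow> r \<le> 1 \<Longrightarrow> measure M (ball x r) \<le> C\<^sub>1 * r powr a"
    using assms(1) unfolding lowerS0_def by blast
  obtain C\<^sub>2 where "0 < C\<^sub>2" and C\<^sub>2: "\<And>r. 0 < r \<Longrightarrow> r \<le> 1 \<Longrightarrow> C\<^sub>2 * r powr b \<le> measure M (ball x r)"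
    using assms(2) unfolding upperS0_def by blast
  obtain r where r: "0 < r" "r \<le> 1" "r powr (a - b) < C\<^sub>2 / C\<^sub>1"
    using exists_small_powr_less[of "a - b" "C\<^sub>2 / C\<^sub>1"] \<open>\<not> a \<le> b\<close> \<open>0 < C\<^sub>1\<close> \<open>0 < C\<^sub>2\<close> by auto
  have "C\<^sub>2 * r powr b \<le> (C\<^sub>1 * r powr (a - b)) * r powr b"
    using order_trans[OF C\<^sub>2 C\<^sub>1, OF r(1,2) r(1,2)] r(1) by (simp add: powr_diff)
  then have "C\<^sub>2 \<le> C\<^sub>1 * r powr (a - b)"
    using r(1) by simp
  moreover have "C\<^sub>1 * r powr (a - b) < C\<^sub>2"
    using r(3) \<open>0 < C\<^sub>1\<close> by (simp add: field_simps)
  ultimately show False by linarith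
qed

lemma lowerQ0_subset_lowerS0:
  assumes m1: "0 < measure M (ball x 1)"
  shows "lowerQ0 M x \<subseteq> lowerS0 M x"
proof
  fix q assume "q \<in> lowerQ0 M x"
  then obtain C where "0 < q" "0 < C" and C: "\<And>r R. 0 < r \<Longrightarrow> r < R \<Longrightarrow> R \<le> 1 \<Longrightarrow>
      measure M (ball x r) / measure M (ball x R) \<le> C * (r / R) powr q"
    unfolding lowerQ0_def by blast
  have "measure M (ball x r) \<le> (max C 1 * measure M (ball x 1)) * r powr q"
    if r: "0 < r" "r \<le> 1" for r
  proof (cases "r = 1")
    case False
    then have "measure M (ball x r) \<le> C * r powr q * measure M (ball x 1)"
      using C[of r 1] r m1 by (simp add: field_simps)
    also have "\<dots> \<le> (max C 1 * measure M (ball x 1)) * r powr q"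
      using m1 r by (simp add: mult_right_mono mult.commute mult.left_commute)
    finally show ?thesis .
  qed (use m1 in simp)
  then show "q \<in> lowerS0 M x"
    unfolding lowerS0_def using \<open>0 < q\<close> m1 by (auto intro!: exI[of _ "max C 1 * measure M (ball x 1)"])
qed

lemma upperQ0_subset_upperS0:
  assumes m1: "0 < measure M (ball x 1)"
  shows "upperQ0 M x \<subseteq> upperS0 M x"
proof
  fix q assume "q \<in> upperQ0 M x"
  then obtain C where "0 < q" "0 < C" and C: "\<And>r R. 0 < r \<Longrightarrow> r < R \<Longrightarrow> R \<le> 1 \<Longrightarrow>
      C * (r / R) powr q \<le> measure M (ball x r) / measure M (ball x R)"
    unfolding upperQ0_def by blast
  have "(min C 1 * measure M (ball x 1)) * r powr q \<le> measure M (ball x r)"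
    if r: "0 < r" "r \<le> 1" for r
  proof (cases "r = 1")
    case False
    have "(min C 1 * measure M (ball x 1)) * r powr q \<le> C * r powr q * measure M (ball x 1)"
      using m1 r by (simp add: mult_right_mono mult.commute mult.left_commute)
    also have "\<dots> \<le> measure M (ball x r)"
      using C[of r 1] r m1 False by (simp add: field_simps)
    finally show ?thesis .
  qed (use m1 in simp)
  then show "q \<in> upperS0 M x"
    unfolding upperS0_def using \<open>0 < q\<close> \<open>0 < C\<close> m1
    by (auto intro!: exI[of _ "min C 1 * measure M (ball x 1)"])
qed

lemma lowerQ0_downward_closed:
  assumes "q \<in> lowerQ0 M x" "0 < p" "p \<le> q"
  shows "p \<in> lowerQ0 M x"
proof -
  obtain C where "0 < C" and C: "\<And>r R. 0 < r \<Longrightarrow> r < R \<Longrightarrow> R \<le> 1 \<Longrightarrow>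
      measure M (ball x r) / measure M (ball x R) \<le> C * (r / R) powr q"
    using assms(1) unfolding lowerQ0_def by blast
  have "measure M (ball x r) / measure M (ball x R) \<le> C * (r / R) powr p"
    if "0 < r" "r < R" "R \<le> 1" for r R
  proof -
    have "(r / R) powr q \<le> (r / R) powr p"
      using that assms(3) by (intro powr_mono') auto
    then show ?thesis
      using C[OF that] \<open>0 < C\<close> by (meson mult_left_mono less_imp_le order_trans)
  qed
  then show ?thesis
    unfolding lowerQ0_def using \<open>0 < p\<close> \<open>0 < C\<close> by blast
qed

lemma upperQ0_upward_closed:
  assumes "q \<in> upperQ0 M x" "q \<le> p"
  shows "p \<in> upperQ0 M x"
proof -
  obtain C where "0 < q" "0 < C" and C: "\<And>r R. 0 < r \<Longrightarrow> r < R \<Longrightarrow> R \<le> 1 \<Longrightarrow>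
      C * (r / R) powr q \<le> measure M (ball x r) / measure M (ball x R)"
    using assms(1) unfolding upperQ0_def by blast
  have "C * (r / R) powr p \<le> measure M (ball x r) / measure M (ball x R)"
    if "0 < r" "r < R" "R \<le> 1" for r R
  proof -
    have "(r / R) powr p \<le> (r / R) powr q"
      using that assms(2) by (intro powr_mono') auto
    then show ?thesis
      using C[OF that] \<open>0 < C\<close> by (meson mult_left_mono less_imp_le order_trans)
  qed
  then show ?thesis
    unfolding upperQ0_def using \<open>0 < q\<close> \<open>0 < C\<close> assms(2) by auto
qed

lemma mem_Q0_if_mem_lowerS0_upperS0:
  assumes "s \<in> lowerS0 M x" "s \<in> upperS0 M x"
  shows "s \<in> lowerQ0 M x" "s \<in> upperQ0 M x"
proof -
  obtain C\<^sub>1 where "0 < s" "0 < C\<^sub>1" and C\<^sub>1: "\<And>r. 0 < r \<Longrightarrow> r \<le> 1 \<Longrightarrow> measure M (ball x r) \<le> C\<^sub>1 * r powr s"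
    using assms(1) unfolding lowerS0_def by blast
  obtain C\<^sub>2 where "0 < C\<^sub>2" and C\<^sub>2: "\<And>r. 0 < r \<Longrightarrow> r \<le> 1 \<Longrightarrow> C\<^sub>2 * r powr s \<le> measure M (ball x r)"
    using assms(2) unfolding upperS0_def by blast
  note ratio = ratio_bounds_of_powr_bounds[where f = "\<lambda>r. measure M (ball x r)", OF \<open>0 < C\<^sub>2\<close>]
  have "measure M (ball x r) / measure M (ball x R) \<le> (C\<^sub>1 / C\<^sub>2) * (r / R) powr s"
    if "0 < r" "r < R" "R \<le> 1" for r R
    using that by (intro ratio(1)) (auto intro!: C\<^sub>1 C\<^sub>2)
  then show "s \<in> lowerQ0 M x"
    unfolding lowerQ0_def using \<open>0 < s\<close> \<open>0 < C\<^sub>1\<close> \<open>0 < C\<^sub>2\<close> by (auto intro!: exI[of _ "C\<^sub>1 / C\<^sub>2"])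
  have "(C\<^sub>2 / C\<^sub>1) * (r / R) powr s \<le> measure M (ball x r) / measure M (ball x R)"
    if "0 < r" "r < R" "R \<le> 1" for r R
    using that by (intro ratio(2)) (auto intro!: C\<^sub>1 C\<^sub>2)
  then show "s \<in> upperQ0 M x"
    unfolding upperQ0_def using \<open>0 < s\<close> \<open>0 < C\<^sub>1\<close> \<open>0 < C\<^sub>2\<close> by (auto intro!: exI[of _ "C\<^sub>2 / C\<^sub>1"])
qed

end

theorem lemma2p3:
  fixes M :: "'a::metric_space measure" and x :: 'a
  assumes space: "space M = UNIV"
    and borel: "sets borel \<subseteq> sets M"
    and complete: "complete_measure M"
    and balls: "\<And>y r. 0 < r \<Longrightarrow> 0 < emeasure M (ball y r) \<and> emeasure M (ball y r) < \<infinity>"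
  shows "lowerQ0 M x \<subseteq> lowerS0 M x
    \<and> upperQ0 M x \<subseteq> upperS0 M x
    \<and> (\<forall>p q. p \<in> lowerS0 M x \<inter> upperS0 M x \<and> q \<in> lowerS0 M x \<inter> upperS0 M x \<longrightarrow> p = q)
    \<and> (lowerS0 M x \<inter> upperS0 M x \<noteq> {} \<longrightarrow>
           lowerQ0 M x = lowerS0 M x \<and> upperQ0 M x = upperS0 M x)"
proof -
  have m1: "0 < measure M (ball x 1)"
    using balls[of 1] by (simp add: measure_def enn2real_positive_iff)
  note QS = lowerQ0_subset_lowerS0[OF m1] upperQ0_subset_upperS0[OF m1]
  have "lowerS0 M x \<subseteq> lowerQ0 M x \<and> upperS0 M x \<subseteq> upperQ0 M x"
    if s: "s \<in> lowerS0 M x" "s \<in> upperS0 M x" for s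
  proof (intro conjI subsetI)
    fix q assume q: "q \<in> lowerS0 M x"
    then have "0 < q" by (simp add: lowerS0_def)
    with q show "q \<in> lowerQ0 M x"
      using lowerQ0_downward_closed mem_Q0_if_mem_lowerS0_upperS0(1)[OF s]
        lowerS0_le_upperS0[OF q s(2)] by blast
  next
    fix q assume "q \<in> upperS0 M x"
    then show "q \<in> upperQ0 M x"
      using upperQ0_upward_closed mem_Q0_if_mem_lowerS0_upperS0(2)[OF s]
        lowerS0_le_upperS0[OF s(1)] by blast
  qed
  then show ?thesis
    using QS lowerS0_le_upperS0 by (blast intro: order.antisym)
qed

end
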